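(* Let $G$ be a chordal graph, $X\subsetneq V(G)$ a clique, and $L_1,\dots,L_t$ the evaporation sequence of $G$ with exception set $X$. If $G\setminus X$ is connected and $X\subseteq N(L_t)$, then $X\cup L_t$ is a clique.
   Context: A vertex is simplicial if its neighborhood is a clique. For a chordal graph $G$ and a clique $X\subseteq V(G)$ (possibly empty), the evaporation sequence of $G$ with exception set $X$ is defined recursively: if $X=V(G)$ it is the empty sequence; otherwise let $L_1$ be the set of simplicial vertices of $G$ that are not in $X$ (this set is always nonempty), and the evaporation sequence is $L_1$ followed by the evaporation sequence of $G-L_1$ with exception set $X$. For $S\subseteq V(G)$, $N(S)$ denotes the set of vertices not in $S$ that are adjacent to some vertex of $S$. *)

theory Defs
  imports Main
begin

definition sgraph :: "'a set \<Rightarrow> ('a \<Rightarrow> 'a \<Rightarrow> bool) \<Rightarrow> bool" where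
  "sgraph V E \<longleftrightarrow> finite V \<and> (\<forall>x y. E x y \<longrightarrow> E y x) \<and> (\<forall>x. \<not> E x x)
     \<and> (\<forall>x y. E x y \<longrightarrow> x \<in> V \<and> y \<in> V)"

definition clique :: "'a set \<Rightarrow> ('a \<Rightarrow> 'a \<Rightarrow> bool) \<Rightarrow> 'a set \<Rightarrow> bool" where
  "clique V E C \<longleftrightarrow> C \<subseteq> V \<and> (\<forall>x\<in>C. \<forall>y\<in>C. x \<noteq> y \<longrightarrow> E x y)"

definition simplicial :: "'a set \<Rightarrow> ('a \<Rightarrow> 'a \<Rightarrow> bool) \<Rightarrow> 'a \<Rightarrow> bool" where
  "simplicial V E v \<longleftrightarrow> v \<in> V \<and> clique V E {u \<in> V. E v u}"

definition chordless_cycle :: "'a set \<Rightarrow> ('a \<Rightarrow> 'a \<Rightarrow> bool) \<Rightarrow> 'a list \<Rightarrow> bool" where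
  "chordless_cycle V E vs \<longleftrightarrow> length vs \<ge> 4 \<and> distinct vs \<and> set vs \<subseteq> V \<and>
     (\<forall>i < length vs. \<forall>j < length vs.
        E (vs ! i) (vs ! j) \<longleftrightarrow> (j = Suc i mod length vs \<or> i = Suc j mod length vs))"

definition chordal :: "'a set \<Rightarrow> ('a \<Rightarrow> 'a \<Rightarrow> bool) \<Rightarrow> bool" where
  "chordal V E \<longleftrightarrow> (\<nexists>vs. chordless_cycle V E vs)"

inductive evap :: "'a set \<Rightarrow> ('a \<Rightarrow> 'a \<Rightarrow> bool) \<Rightarrow> 'a set \<Rightarrow> 'a set list \<Rightarrow> bool" where
  evap_Nil: "X = V \<Longrightarrow> evap V E X []"
| evap_Cons: "X \<noteq> V \<Longrightarrow> L = {v \<in> V - X. simplicial V E v} \<Longrightarrow> evap (V - L) E X Ls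
     \<Longrightarrow> evap V E X (L # Ls)"

definition nbhd :: "'a set \<Rightarrow> ('a \<Rightarrow> 'a \<Rightarrow> bool) \<Rightarrow> 'a set \<Rightarrow> 'a set" where
  "nbhd V E S = {v \<in> V - S. \<exists>u\<in>S. E u v}"

definition connected_on :: "'a set \<Rightarrow> ('a \<Rightarrow> 'a \<Rightarrow> bool) \<Rightarrow> bool" where
  "connected_on S E \<longleftrightarrow> S \<noteq> {} \<and>
     (\<forall>x\<in>S. \<forall>y\<in>S. (x, y) \<in> {(a, b). a \<in> S \<and> b \<in> S \<and> E a b}\<^sup>*)"

end

theory Submission
  imports Defs
begin

text \<open>Removing simplicial vertices keeps \<open>G - X\<close> connected, since a
  path through a removed vertex can shortcut between its two neighbours. Hence the last
  layer \<open>L\<close> induces a connected graph in which, by the definition of the sequence,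
  every vertex is simplicial in \<open>G[X \<union> L]\<close>; such a graph is complete. Finally a
  vertex \<open>x \<in> X\<close> adjacent to some \<open>u \<in> L\<close> is adjacent to every other \<open>v \<in> L\<close>,
  because \<open>x\<close> and \<open>v\<close> are both neighbours of the simplicial vertex \<open>u\<close>.\<close>

lemma simplicial_neighbours_adjacent:
  assumes "simplicial V E v" "a \<in> V" "b \<in> V" "E v a" "E v b" "a \<noteq> b"
  shows "E a b"
  using assms unfolding simplicial_def clique_def by blast

lemma connected_on_Diff_simplicial:
  assumes sym: "\<And>x y. E x y \<Longrightarrow> E y x"
    and conn: "connected_on S E" and "S \<subseteq> V"
    and L_simplicial: "\<forall>v\<in>L. simplicial V E v"
    and ne: "S - L \<noteq> {}"
  shows "connected_on (S - L) E"
proof -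
  let ?R = "{(a, b). a \<in> S \<and> b \<in> S \<and> E a b}"
  let ?RL = "{(a, b). a \<in> S - L \<and> b \<in> S - L \<and> E a b}"
  have reach: "(b \<in> S - L \<and> (a, b) \<in> ?RL\<^sup>*) \<or> (b \<in> L \<and> (\<exists>c\<in>S - L. (a, c) \<in> ?RL\<^sup>* \<and> E c b))"
    if a: "a \<in> S - L" and "(a, b) \<in> ?R\<^sup>*" for a b
    using that(2)
  proof (induction rule: rtrancl_induct)
    case base
    then show ?case using a by auto
  next
    case (step b b')
    then have b': "b' \<in> S" and bb': "E b b'" by auto
    from step.IH obtain c where c: "c \<in> S - L" "(a, c) \<in> ?RL\<^sup>*" "c = b \<or> b \<in> L \<and> E c b"
      by blast
    have "c = b' \<or> E c b'"
    proof (cases "c = b")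
      case False
      with c L_simplicial have "simplicial V E b" and "E b c" by (auto intro: sym)
      with c b' bb' \<open>S \<subseteq> V\<close> show ?thesis
        using simplicial_neighbours_adjacent[of V E b c b'] by blast
    qed (use bb' in auto)
    then show ?case
    proof
      assume "E c b'"
      show ?case
      proof (cases "b' \<in> L")
        case False
        with c b' \<open>E c b'\<close> have "(c, b') \<in> ?RL" by auto
        with c(2) False b' show ?thesis by (meson DiffI rtrancl_into_rtrancl)
      qed (use c \<open>E c b'\<close> in blast)
    qed (use c in auto)
  qed
  show ?thesis unfolding connected_on_def
  proof (intro conjI ballI)
    fix x y assume xy: "x \<in> S - L" "y \<in> S - L"
    then have "(x, y) \<in> ?R\<^sup>*" using conn unfolding connected_on_def by auto
    with reach[OF xy(1)] xy(2) show "(x, y) \<in> ?RL\<^sup>*" by auto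
  qed (rule ne)
qed

lemma evap_last_layer:
  assumes "evap V E X Ls" and sym: "\<And>x y. E x y \<Longrightarrow> E y x"
    and "Ls \<noteq> []" "X \<subseteq> V" "connected_on (V - X) E"
  shows "\<exists>W. X \<subseteq> W \<and> W \<subseteq> V \<and> last Ls = W - X \<and> (\<forall>v\<in>last Ls. simplicial W E v)
    \<and> connected_on (last Ls) E"
  using assms
proof (induction rule: evap.induct)
  case (evap_Nil X V E)
  then show ?case by simp
next
  case (evap_Cons X V L E Ls)
  show ?case
  proof (cases "Ls = []")
    case True
    with evap_Cons.hyps(3) have "V - L = X" by (auto elim: evap.cases)
    with evap_Cons.hyps(2) have "L = V - X" by auto
    with evap_Cons.prems(3,4) True show ?thesis
      using evap_Cons.hyps(2) by (intro exI[of _ V]) auto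
  next
    case False
    with evap_Cons.hyps(3) have "V - L \<noteq> X" by (auto elim: evap.cases)
    moreover have "X \<subseteq> V - L" using evap_Cons.hyps(2) evap_Cons.prems(3) by auto
    ultimately have "V - X - L \<noteq> {}" by auto
    with evap_Cons.hyps(2) have "connected_on (V - X - L) E"
      by (intro connected_on_Diff_simplicial[OF evap_Cons.prems(1,4)]) auto
    moreover have "V - X - L = V - L - X" by blast
    ultimately have "connected_on (V - L - X) E" by simp
    with evap_Cons.IH[OF evap_Cons.prems(1) False \<open>X \<subseteq> V - L\<close>] False show ?thesis
      by auto
  qed
qed

lemma connected_simplicial_clique:
  assumes sym: "\<And>x y. E x y \<Longrightarrow> E y x"
    and conn: "connected_on S E" and "S \<subseteq> W"
    and S_simplicial: "\<forall>v\<in>S. simplicial W E v"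
  shows "clique W E S"
proof -
  have "w = u \<or> E u w" if u: "u \<in> S" and "(u, w) \<in> {(a, b). a \<in> S \<and> b \<in> S \<and> E a b}\<^sup>*"
    for u w
    using that(2)
  proof (induction rule: rtrancl_induct)
    case (step b b')
    then show ?case
      using u sym S_simplicial \<open>S \<subseteq> W\<close> simplicial_neighbours_adjacent[of W E b u b'] by blast
  qed simp
  with conn \<open>S \<subseteq> W\<close> show ?thesis unfolding connected_on_def clique_def by blast
qed

lemma clique_Un_simplicial_neighbours:
  assumes sym: "\<And>x y. E x y \<Longrightarrow> E y x"
    and X: "clique V E X" and L: "clique V E L"
    and L_simplicial: "\<forall>v\<in>L. simplicial W E v" and "X \<union> L \<subseteq> W"
    and adj: "\<forall>x\<in>X. \<exists>u\<in>L. E u x"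
  shows "clique V E (X \<union> L)"
proof -
  have "E x v \<and> E v x" if x: "x \<in> X" and v: "v \<in> L" and "x \<noteq> v" for x v
  proof -
    obtain u where u: "u \<in> L" "E u x" using adj x by blast
    have "E x v"
    proof (cases "u = v")
      case True
      with sym[OF u(2)] show ?thesis by simp
    next
      case False
      with L u v have "E u v" unfolding clique_def by blast
      with u x v \<open>x \<noteq> v\<close> L_simplicial \<open>X \<union> L \<subseteq> W\<close> show ?thesis
        using simplicial_neighbours_adjacent[of W E u x v] by blast
    qed
    with sym show ?thesis by blast
  qed
  with X L show ?thesis unfolding clique_def by blast
qed

theorem mainTheorem6:
  fixes V :: "'a set" and E :: "'a \<Rightarrow> 'a \<Rightarrow> bool" and X :: "'a set" and Ls :: "'a set list"
  assumes "sgraph V E" and "chordal V E"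
    and "clique V E X" and "X \<subset> V"
    and "evap V E X Ls"
    and "connected_on (V - X) E"
    and "X \<subseteq> nbhd V E (last Ls)"
  shows "clique V E (X \<union> last Ls)"
proof -
  have sym: "\<And>x y. E x y \<Longrightarrow> E y x" using assms(1) unfolding sgraph_def by blast
  have "Ls \<noteq> []" using assms(4,5) by (auto elim: evap.cases)
  with evap_last_layer[OF assms(5) sym] assms(4,6) obtain W where
    W: "X \<subseteq> W" "W \<subseteq> V" "last Ls = W - X" and
    last_simplicial: "\<forall>v\<in>last Ls. simplicial W E v" and conn: "connected_on (last Ls) E"
    by blast
  have "clique W E (last Ls)"
    using connected_simplicial_clique[OF sym conn _ last_simplicial] W by blast
  with W have "clique V E (last Ls)" unfolding clique_def by blast
  moreover have "\<forall>x\<in>X. \<exists>u\<in>last Ls. E u x" using assms(7) unfolding nbhd_def by blast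
  ultimately show ?thesis
    using clique_Un_simplicial_neighbours[OF sym assms(3) _ last_simplicial] W by blast
qed

end
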